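(* Let $b$ be a positive integer and let $f(x)=\sum_{k=2}^{\infty}x^k\sum_{j=1}^{\infty}\frac{1}{(j+b)^k}=\sum_{k=2}^\infty x^k(\zeta(k)-H_k(b))$, convergent for $|x|<b+1$. Then for $x$ in this disc with $x\ne b$, $2x\notin\mathbb{Z}$, $$f(x)=\frac{x^2}{2b(x-b)}-\frac{\pi x}{2}\cot(\pi x)-\pi x\int_0^1\left(\frac{\sin(2\pi(x-b)u)}{\sin(2\pi x)}-u\cos(2\pi b u)\right)\cot(\pi u)\,du,$$ and the right-hand side gives an analytic continuation of $f$ to such $x\in\mathbb{C}$.
   Context: $\zeta$ is the Riemann zeta function and $H_k(n)=\sum_{m=1}^n m^{-k}$ is the generalized harmonic number. *)

theory Defs
  imports "HOL-Analysis.Analysis"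
begin

(* Riemann zeta at integer arguments k >= 2 (only used for k >= 2) *)
definition zeta_nat :: "nat \<Rightarrow> real" where
  "zeta_nat k = (\<Sum>n. 1 / (real (Suc n)) ^ k)"

definition harm_gen :: "nat \<Rightarrow> nat \<Rightarrow> real" where
  "harm_gen k n = (\<Sum>m=1..n. 1 / (real m) ^ k)"

definition f_series :: "nat \<Rightarrow> complex \<Rightarrow> complex" where
  "f_series b x = (\<Sum>k. x ^ (k + 2) * complex_of_real (zeta_nat (k + 2) - harm_gen (k + 2) b))"

definition rhs_formula :: "nat \<Rightarrow> complex \<Rightarrow> complex" where
  "rhs_formula b x =
     x\<^sup>2 / (2 * of_nat b * (x - of_nat b))
     - of_real pi * x / 2 * cot (of_real pi * x)
     - of_real pi * x * integral {0..1} (\<lambda>u::real.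
          (sin (2 * of_real pi * (x - of_nat b) * of_real u) / sin (2 * of_real pi * x)
           - of_real u * of_real (cos (2 * pi * real b * u))) * of_real (cot (pi * u)))"

end

theory Submission
  imports Defs "HOL-Complex_Analysis.Cauchy_Integral_Formula"
begin

text \<open>
  Both sides equal \<open>x (H\<^sub>b - \<psi>(b + 1 - x) - \<gamma>)\<close>.
  For the series, expand \<open>\<zeta>(k) - H\<^sub>k(b) = \<Sum>\<^sub>j (j + b + 1)\<^sup>-\<^sup>k\<close> and sum the geometric series
  in \<open>k\<close> first; the resulting sum over \<open>j\<close> is a Digamma series.
  For the integral, the bracket \<open>g(u)\<close> in the integrand vanishes at \<open>u = 0\<close> and \<open>u = 1\<close>, so \<open>g(u) cot(\<pi>u)\<close>
  is bounded, and pairing \<open>g\<close> with the (Abel-summed) Fourier series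
  \<open>cot(\<pi>u) = \<Sum>\<^sub>k\<^sub>\<ge>\<^sub>1 2 sin(2\<pi>ku)\<close> turns the integral into a series of partial fractions,
  again a combination of Digamma series. The reflection formula
  \<open>\<psi>(1 - z) - \<psi>(z) = \<pi> cot(\<pi>z)\<close> then matches the two closed forms, and the closed form
  is holomorphic away from \<open>b + 1, b + 2, \<dots>\<close>.
\<close>

section \<open>Abel summation of the sine series of \<open>cot (\<pi> u)\<close>\<close>

lemma sin_geometric_sums:
  fixes r t :: real
  assumes "0 \<le> r" "r < 1"
  shows "(\<lambda>k. r ^ Suc k * sin (real (Suc k) * t)) sums (r * sin t / (1 - 2 * r * cos t + r\<^sup>2))"
proof -
  define z where "z = complex_of_real r * cis t"
  have "norm z < 1" using assms by (simp add: z_def norm_mult)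
  hence "(\<lambda>k. z * z ^ k) sums (z * (1 / (1 - z)))"
    by (intro sums_mult) (simp add: geometric_sums)
  hence "(\<lambda>k. Im (z ^ Suc k)) sums Im (z / (1 - z))"
    by (intro sums_Im) simp
  moreover have "Im (z ^ Suc k) = r ^ Suc k * sin (real (Suc k) * t)" for k
  proof -
    have "z ^ Suc k = complex_of_real (r ^ Suc k) * cis (real (Suc k) * t)"
      unfolding z_def power_mult_distrib of_real_power by (subst Complex.DeMoivre[symmetric]) (rule refl)
    thus ?thesis by simp
  qed
  moreover have "Im (z / (1 - z)) = r * sin t / (1 - 2 * r * cos t + r\<^sup>2)"
  proof -
    have "Im (z / (1 - z)) = (r * sin t * (1 - r * cos t) + r * cos t * (r * sin t))
                              / ((1 - r * cos t)\<^sup>2 + (r * sin t)\<^sup>2)"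
      by (simp add: z_def Im_divide power2_eq_square)
    also have "(1 - r * cos t)\<^sup>2 + (r * sin t)\<^sup>2 = 1 - 2 * r * cos t + r\<^sup>2"
      by (simp add: power2_eq_square algebra_simps sin_squared_eq[unfolded power2_eq_square])
    finally show ?thesis by (simp add: algebra_simps)
  qed
  ultimately show ?thesis by simp
qed

definition conj_poisson_kernel :: "real \<Rightarrow> real \<Rightarrow> real" where
  "conj_poisson_kernel r u = 2 * r * sin (2 * pi * u) / (1 - 2 * r * cos (2 * pi * u) + r\<^sup>2)"

lemma conj_poisson_kernel_sums:
  assumes "0 \<le> r" "r < 1"
  shows "(\<lambda>k. 2 * r ^ Suc k * sin (2 * pi * real (Suc k) * u)) sums conj_poisson_kernel r u"
  using sums_mult[OF sin_geometric_sums[OF assms, of "2 * pi * u"], of 2]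
  by (simp add: conj_poisson_kernel_def algebra_simps)

lemma conj_poisson_kernel_0 [simp]: "conj_poisson_kernel r 0 = 0"
  and conj_poisson_kernel_1 [simp]: "conj_poisson_kernel r 1 = 0"
  by (simp_all add: conj_poisson_kernel_def)

lemma sin_two_pi_mult_eq_double: "sin (2 * pi * u) = 2 * sin (pi * u) * cos (pi * u)"
  using sin_double[of "pi * u"] by (simp add: mult.assoc)

lemma conj_poisson_kernel_denom:
  "1 - 2 * r * cos (2 * pi * u) + r\<^sup>2 = (1 - r)\<^sup>2 + 4 * r * (sin (pi * u))\<^sup>2"
proof -
  have "cos (2 * pi * u) = 1 - 2 * (sin (pi * u))\<^sup>2"
    using cos_double_sin[of "pi * u"] by (simp add: mult.assoc)
  thus ?thesis by (simp only:) (simp add: power2_eq_square algebra_simps)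
qed

lemma abs_conj_poisson_kernel_le:
  assumes "0 \<le> r"
  shows "\<bar>conj_poisson_kernel r u\<bar> \<le> \<bar>cot (pi * u)\<bar>"
proof (cases "sin (pi * u) = 0 \<or> r = 0")
  case True
  thus ?thesis by (auto simp: conj_poisson_kernel_def sin_two_pi_mult_eq_double)
next
  case False
  hence r: "r > 0" and s0: "sin (pi * u) \<noteq> 0" and s: "4 * r * (sin (pi * u))\<^sup>2 > 0"
    using assms by auto
  have d: "4 * r * (sin (pi * u))\<^sup>2 \<le> (1 - r)\<^sup>2 + 4 * r * (sin (pi * u))\<^sup>2" by simp
  have pos: "(1 - r)\<^sup>2 + 4 * r * (sin (pi * u))\<^sup>2 > 0" using s d by linarith
  have "\<bar>conj_poisson_kernel r u\<bar>
        = 4 * r * \<bar>sin (pi * u) * cos (pi * u)\<bar> / ((1 - r)\<^sup>2 + 4 * r * (sin (pi * u))\<^sup>2)"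
    using r pos by (simp add: conj_poisson_kernel_def conj_poisson_kernel_denom sin_two_pi_mult_eq_double
        abs_mult abs_divide)
  also have "\<dots> \<le> 4 * r * \<bar>sin (pi * u) * cos (pi * u)\<bar> / (4 * r * (sin (pi * u))\<^sup>2)"
    using r s d pos by (intro divide_left_mono mult_pos_pos) auto
  also have "\<dots> = \<bar>cot (pi * u)\<bar>"
    using r s0 by (simp add: cot_def abs_mult power2_eq_square field_simps)
  finally show ?thesis .
qed

lemma tendsto_conj_poisson_kernel:
  assumes "sin (pi * u) \<noteq> 0" and "(r \<longlongrightarrow> 1) F"
  shows "((\<lambda>n. conj_poisson_kernel (r n) u) \<longlongrightarrow> cot (pi * u)) F"
proof -
  have denom: "1 - 2 * 1 * cos (2 * pi * u) + 1\<^sup>2 = 4 * (sin (pi * u))\<^sup>2"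
    using conj_poisson_kernel_denom[of 1 u] by simp
  hence "1 - 2 * 1 * cos (2 * pi * u) + 1\<^sup>2 \<noteq> 0" using assms(1) by simp
  hence "((\<lambda>n. conj_poisson_kernel (r n) u) \<longlongrightarrow>
          2 * 1 * sin (2 * pi * u) / (1 - 2 * 1 * cos (2 * pi * u) + 1\<^sup>2)) F"
    unfolding conj_poisson_kernel_def by (intro tendsto_intros assms(2))
  also have "2 * 1 * sin (2 * pi * u) / (1 - 2 * 1 * cos (2 * pi * u) + 1\<^sup>2) = cot (pi * u)"
    using assms(1) unfolding denom by (simp add: sin_two_pi_mult_eq_double cot_def power2_eq_square)
  finally show ?thesis .
qed

lemma mult_cos_le_sin:
  fixes t :: real
  assumes "0 \<le> t" "t \<le> pi"
  shows "t * cos t \<le> sin t"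
proof -
  have "sin 0 - 0 * cos 0 \<le> sin t - t * cos t"
  proof (rule DERIV_nonneg_imp_nondecreasing[of 0 t "\<lambda>t. sin t - t * cos t"])
    fix y assume "0 \<le> y" "y \<le> t"
    hence "((\<lambda>t. sin t - t * cos t) has_real_derivative y * sin y) (at y) \<and> 0 \<le> y * sin y"
      using assms by (auto intro!: derivative_eq_intros mult_nonneg_nonneg sin_ge_zero)
    thus "\<exists>d. ((\<lambda>t. sin t - t * cos t) has_real_derivative d) (at y) \<and> 0 \<le> d" ..
  qed (use assms in auto)
  thus ?thesis by simp
qed

lemma abs_cot_pi_mult_le:
  assumes "0 < u" "u \<le> 1/2"
  shows "\<bar>cot (pi * u)\<bar> * u \<le> 1 / pi"
proof -
  have s: "sin (pi * u) > 0" using assms by (intro sin_gt_zero) auto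
  have "0 \<le> pi * u" "pi * u \<le> pi / 2" using assms by auto
  hence c: "cos (pi * u) \<ge> 0" by (intro cos_ge_zero) (use pi_gt_zero in linarith)+
  have "(pi * u) * cos (pi * u) \<le> sin (pi * u)" using assms by (intro mult_cos_le_sin) auto
  hence "cos (pi * u) * u / sin (pi * u) \<le> 1 / pi"
    using s pi_gt_zero by (simp add: field_simps)
  thus ?thesis using s c by (simp add: cot_def abs_mult abs_divide)
qed

lemma abs_cot_pi_mult_min_le:
  assumes "0 < u" "u < 1"
  shows "\<bar>cot (pi * u)\<bar> * min u (1 - u) \<le> 1 / pi"
proof (cases "u \<le> 1/2")
  case True thus ?thesis using abs_cot_pi_mult_le[of u] assms by (simp add: min_def)
next
  case False
  have "cot (pi * u) = - cot (pi * (1 - u))"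
    by (simp add: cot_def right_diff_distrib sin_diff cos_diff)
  thus ?thesis using abs_cot_pi_mult_le[of "1 - u"] assms False by (simp add: min_def)
qed

lemma bounded_mult_cot_if_vanishing_at_0_1:
  fixes g :: "complex \<Rightarrow> complex"
  assumes holo: "g holomorphic_on UNIV" and "g 0 = 0" "g 1 = 0"
  obtains B where "\<And>u. u \<in> {0..1} \<Longrightarrow> norm (g (of_real u) * of_real (cot (pi * u))) \<le> B"
proof -
  let ?S = "closed_segment (0::complex) 1"
  have "deriv g holomorphic_on UNIV" using holo by (intro holomorphic_deriv) auto
  hence "continuous_on ?S (deriv g)"
    by (intro holomorphic_on_imp_continuous_on) (auto elim: holomorphic_on_subset)
  hence "compact (deriv g ` ?S)" by (intro compact_continuous_image) auto
  then obtain L where L: "L > 0" "\<And>z. z \<in> ?S \<Longrightarrow> norm (deriv g z) \<le> L"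
    by (auto dest!: compact_imp_bounded simp: bounded_pos)
  have lipschitz: "norm (g w - g v) \<le> L * norm (w - v)" if "w \<in> ?S" "v \<in> ?S" for w v
  proof (rule field_differentiable_bound[OF convex_closed_segment _ _ that, where f' = "deriv g"])
    show "(g has_field_derivative deriv g z) (at z within ?S)" for z
      using holo by (rule holomorphic_derivI) auto
  qed (rule L(2))
  have in_S: "complex_of_real u \<in> ?S" if "u \<in> {0..1}" for u
    using that by (auto simp: closed_segment_def scaleR_conv_of_real intro!: exI[of _ u])
  have "norm (g (of_real u) * of_real (cot (pi * u))) \<le> L / pi" if u: "u \<in> {0..1}" for u
  proof (cases "u = 0 \<or> u = 1")
    case True thus ?thesis using L by auto
  next
    case False
    hence u': "0 < u" "u < 1" using u by auto
    have "norm (g (of_real u)) \<le> L * u"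
      using lipschitz[OF in_S[OF u], of 0] u' \<open>g 0 = 0\<close> by simp
    moreover have "norm (g (of_real u)) \<le> L * (1 - u)"
    proof -
      have "norm (complex_of_real u - 1) = 1 - u"
        using u' by (metis abs_of_pos diff_gt_0_iff_gt norm_minus_commute norm_of_real of_real_1 of_real_diff)
      thus ?thesis using lipschitz[OF in_S[OF u], of 1] \<open>g 1 = 0\<close> by simp
    qed
    ultimately have "norm (g (of_real u)) * \<bar>cot (pi * u)\<bar> \<le> L * min u (1 - u) * \<bar>cot (pi * u)\<bar>"
      by (intro mult_right_mono) (auto simp: min_def)
    also have "\<dots> \<le> L * (1 / pi)"
      using mult_left_mono[OF abs_cot_pi_mult_min_le[OF u'], of L] L by (simp add: mult_ac)
    finally show ?thesis by (simp add: norm_mult)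
  qed
  thus ?thesis by (rule that)
qed

lemma abs_conj_poisson_partial_sum_le:
  assumes "0 \<le> r" "r < 1"
  shows "\<bar>\<Sum>k<n. 2 * r ^ Suc k * sin (2 * pi * real (Suc k) * u)\<bar> \<le> 2 / (1 - r)"
proof -
  have "\<bar>\<Sum>k<n. 2 * r ^ Suc k * sin (2 * pi * real (Suc k) * u)\<bar>
        \<le> (\<Sum>k<n. \<bar>2 * r ^ Suc k * sin (2 * pi * real (Suc k) * u)\<bar>)"
    by (rule sum_abs)
  also have "\<dots> \<le> (\<Sum>k<n. 2 * r ^ k)"
  proof (intro sum_mono)
    fix k
    have "\<bar>2 * r ^ Suc k * sin (2 * pi * real (Suc k) * u)\<bar> \<le> 2 * r ^ Suc k * 1"
      using assms by (simp add: abs_mult mult_left_le)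
    also have "\<dots> \<le> 2 * r ^ k" using assms by (simp add: mult_left_le_one_le)
    finally show "\<bar>2 * r ^ Suc k * sin (2 * pi * real (Suc k) * u)\<bar> \<le> 2 * r ^ k" .
  qed
  also have "\<dots> = 2 * (\<Sum>k<n. r ^ k)" by (simp add: sum_distrib_left)
  also have "(\<Sum>k<n. r ^ k) \<le> (\<Sum>k. r ^ k)"
    using assms by (intro sum_le_suminf summable_geometric) auto
  also have "(\<Sum>k. r ^ k) = 1 / (1 - r)" using suminf_geometric[of r] assms by simp
  finally show ?thesis by simp
qed

lemma has_integral_mult_conj_poisson_kernel:
  fixes g :: "real \<Rightarrow> complex" and c :: "nat \<Rightarrow> complex"
  assumes cont: "continuous_on {0..1} g" and r: "0 \<le> r" "r < 1"
    and coeff: "\<And>k. ((\<lambda>u. g u * of_real (2 * sin (2 * pi * real (Suc k) * u))) has_integral c k) {0..1}"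
    and summ: "summable (\<lambda>k. norm (c k))"
  shows "((\<lambda>u. g u * of_real (conj_poisson_kernel r u)) has_integral
           (\<Sum>k. of_real (r ^ Suc k) * c k)) {0..1}"
proof -
  obtain M where M: "\<And>u. u \<in> {0..1} \<Longrightarrow> norm (g u) \<le> M"
    using compact_imp_bounded[OF compact_continuous_image[OF cont]] by (force simp: bounded_iff)
  define S where "S n u = (\<Sum>k<n. 2 * r ^ Suc k * sin (2 * pi * real (Suc k) * u))" for n u
  have integral: "((\<lambda>u. g u * of_real (S n u)) has_integral (\<Sum>k<n. of_real (r ^ Suc k) * c k)) {0..1}" for n
  proof -
    have "((\<lambda>u. \<Sum>k<n. of_real (r ^ Suc k) * (g u * of_real (2 * sin (2 * pi * real (Suc k) * u))))
            has_integral (\<Sum>k<n. of_real (r ^ Suc k) * c k)) {0..1}"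
      by (intro has_integral_sum has_integral_mult_right coeff) auto
    thus ?thesis by (rule has_integral_eq[rotated]) (simp add: S_def sum_distrib_left algebra_simps)
  qed
  have bound: "norm (g u * of_real (S n u)) \<le> M * (2 / (1 - r))" if "u \<in> {0..1}" for n u
    unfolding norm_mult norm_of_real real_norm_def S_def
    using M[OF that] abs_conj_poisson_partial_sum_le[OF r] norm_ge_zero[of "g u"]
    by (intro mult_mono) (auto simp del: norm_ge_zero)
  have pointwise: "(\<lambda>n. g u * of_real (S n u)) \<longlonglongrightarrow> g u * of_real (conj_poisson_kernel r u)" for u
    using conj_poisson_kernel_sums[OF r, of u] unfolding sums_def S_def by (intro tendsto_intros)
  have partial_sums: "(\<lambda>n. \<Sum>k<n. of_real (r ^ Suc k) * c k) \<longlonglongrightarrow> (\<Sum>k. of_real (r ^ Suc k) * c k)"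
  proof (intro summable_LIMSEQ summable_comparison_test[OF _ summ] exI allI impI)
    fix k
    have "norm (complex_of_real (r ^ Suc k) * c k) = r ^ Suc k * norm (c k)"
      using r by (simp add: norm_mult norm_power)
    also have "\<dots> \<le> norm (c k)"
      using r by (intro mult_left_le_one_le power_le_one) auto
    finally show "norm (complex_of_real (r ^ Suc k) * c k) \<le> norm (c k)" .
  qed
  show ?thesis
    by (rule has_integral_dominated_convergence[OF integral _ _ _ partial_sums, of "\<lambda>_. M * (2 / (1 - r))"])
       (use bound pointwise in auto)
qed

lemma tendsto_suminf_Suc_power_mult:
  fixes c :: "nat \<Rightarrow> 'a :: {real_normed_div_algebra, banach}"
  assumes summ: "summable (\<lambda>k. norm (c k))"
    and r: "\<And>n. 0 \<le> r n" "\<And>n. r n \<le> 1" and lim: "r \<longlonglongrightarrow> 1"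
  shows "(\<lambda>n. \<Sum>k. of_real (r n ^ Suc k) * c k) \<longlonglongrightarrow> (\<Sum>k. c k)"
proof (rule tannerys_theorem[THEN conjunct2, THEN conjunct2, of _ _ _ "\<lambda>k. norm (c k)"])
  show "(\<lambda>n. of_real (r n ^ Suc k) * c k) \<longlonglongrightarrow> c k" for k
    using lim by (auto intro!: tendsto_eq_intros)
  show "\<forall>\<^sub>F (k, n) in at_top \<times>\<^sub>F sequentially. norm (of_real (r n ^ Suc k) * c k) \<le> norm (c k)"
  proof (rule always_eventually, clarify)
    fix k n
    have "norm (of_real (r n ^ Suc k) * c k :: 'a) = r n ^ Suc k * norm (c k)"
      using r(1)[of n] by (simp only: norm_mult norm_of_real abs_of_nonneg zero_le_power)
    also have "\<dots> \<le> norm (c k)"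
      using r[of n] by (intro mult_left_le_one_le power_le_one) auto
    finally show "norm (of_real (r n ^ Suc k) * c k :: 'a) \<le> norm (c k)" .
  qed
qed (use summ in auto)

lemma has_integral_mult_cot_of_sine_coeffs:
  fixes g :: "real \<Rightarrow> complex" and c :: "nat \<Rightarrow> complex"
  assumes cont: "continuous_on {0..1} g"
    and bound: "\<And>u. u \<in> {0..1} \<Longrightarrow> norm (g u * of_real (cot (pi * u))) \<le> B"
    and coeff: "\<And>k. ((\<lambda>u. g u * of_real (2 * sin (2 * pi * real (Suc k) * u))) has_integral c k) {0..1}"
    and summ: "summable (\<lambda>k. norm (c k))"
  shows "((\<lambda>u. g u * of_real (cot (pi * u))) has_integral (\<Sum>k. c k)) {0..1}"
proof -
  define r where "r n = 1 - inverse (real (Suc n))" for n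
  have r01: "0 \<le> r n" "r n < 1" for n by (auto simp: r_def field_simps)
  have lim: "r \<longlonglongrightarrow> 1"
    unfolding r_def using tendsto_diff[OF tendsto_const LIMSEQ_inverse_real_of_nat, of 1] by simp
  have dominated: "norm (g u * of_real (conj_poisson_kernel (r n) u)) \<le> B" if "u \<in> {0..1}" for n u
  proof -
    have "norm (g u * of_real (conj_poisson_kernel (r n) u)) \<le> norm (g u) * \<bar>cot (pi * u)\<bar>"
      unfolding norm_mult norm_of_real
      by (intro mult_left_mono abs_conj_poisson_kernel_le r01) auto
    also have "\<dots> \<le> B" using bound[OF that] by (simp add: norm_mult)
    finally show ?thesis .
  qed
  have pointwise: "(\<lambda>n. g u * of_real (conj_poisson_kernel (r n) u)) \<longlonglongrightarrow> g u * of_real (cot (pi * u))"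
    if "u \<in> {0..1}" for u
  proof (cases "u = 0 \<or> u = 1")
    case False
    hence "sin (pi * u) \<noteq> 0" using that sin_gt_zero[of "pi * u"] by auto
    thus ?thesis by (intro tendsto_intros tendsto_conj_poisson_kernel lim)
  qed auto
  have integral: "((\<lambda>u. g u * of_real (conj_poisson_kernel (r n) u)) has_integral
                     (\<Sum>k. of_real (r n ^ Suc k) * c k)) {0..1}" for n
    by (rule has_integral_mult_conj_poisson_kernel[OF cont r01 coeff summ])
  have abel: "(\<lambda>n. \<Sum>k. of_real (r n ^ Suc k) * c k) \<longlonglongrightarrow> (\<Sum>k. c k)"
    using r01 by (intro tendsto_suminf_Suc_power_mult[OF summ _ _ lim]) (auto intro: less_imp_le)
  show ?thesis
    by (rule has_integral_dominated_convergence[OF integral _ _ _ abel, where h = "\<lambda>_. B"])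
       (use dominated pointwise in auto)
qed

section \<open>Sine coefficients of the integrand\<close>

lemma has_integral_0_1_of_field_derivative:
  assumes "\<And>z. (F has_field_derivative f z) (at z)"
  shows "((\<lambda>u. f (complex_of_real u)) has_integral (F 1 - F 0)) {0..1}"
proof -
  have "((\<lambda>u. f (complex_of_real u)) has_integral (F (of_real 1) - F (of_real 0))) {0..1}"
    by (rule fundamental_theorem_of_calculus[of 0 1 "\<lambda>u. F (of_real u)"])
       (auto intro!: has_vector_derivative_real_field assms)
  thus ?thesis by simp
qed

lemma has_integral_two_sin_mult_sin:
  fixes \<alpha> \<beta> :: complex
  assumes "\<alpha> - \<beta> \<noteq> 0" "\<alpha> + \<beta> \<noteq> 0"
  shows "((\<lambda>u. 2 * sin (\<alpha> * of_real u) * sin (\<beta> * of_real u)) has_integral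
           (sin (\<alpha> - \<beta>) / (\<alpha> - \<beta>) - sin (\<alpha> + \<beta>) / (\<alpha> + \<beta>))) {0..1}"
proof -
  define F where "F z = sin ((\<alpha> - \<beta>) * z) / (\<alpha> - \<beta>) - sin ((\<alpha> + \<beta>) * z) / (\<alpha> + \<beta>)" for z
  have "(F has_field_derivative 2 * sin (\<alpha> * z) * sin (\<beta> * z)) (at z)" for z
  proof -
    have "(F has_field_derivative cos ((\<alpha> - \<beta>) * z) - cos ((\<alpha> + \<beta>) * z)) (at z)"
      unfolding F_def using assms by (auto intro!: derivative_eq_intros)
    also have "cos ((\<alpha> - \<beta>) * z) - cos ((\<alpha> + \<beta>) * z) = 2 * sin (\<alpha> * z) * sin (\<beta> * z)"
      by (simp add: ring_distribs cos_diff cos_add)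
    finally show ?thesis .
  qed
  from has_integral_0_1_of_field_derivative[OF this] show ?thesis by (simp add: F_def)
qed

lemma has_integral_mult_sin:
  fixes c :: complex
  assumes "c \<noteq> 0"
  shows "((\<lambda>u. of_real u * sin (c * of_real u)) has_integral (sin c / c\<^sup>2 - cos c / c)) {0..1}"
proof -
  define F where "F z = sin (c * z) / c\<^sup>2 - z * cos (c * z) / c" for z
  have "(F has_field_derivative z * sin (c * z)) (at z)" for z
    unfolding F_def using assms
    by (auto intro!: derivative_eq_intros simp: field_simps power2_eq_square)
  from has_integral_0_1_of_field_derivative[OF this] show ?thesis by (simp add: F_def)
qed

lemma sin_two_pi_of_int: "sin (2 * complex_of_real pi * of_int n) = 0"
  and cos_two_pi_of_int: "cos (2 * complex_of_real pi * of_int n) = 1"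
proof -
  have e: "2 * complex_of_real pi * of_int n = of_real (2 * pi * real_of_int n)" by simp
  show "sin (2 * complex_of_real pi * of_int n) = 0"
    unfolding e sin_of_real by (simp add: sin_integer_2pi)
  show "cos (2 * complex_of_real pi * of_int n) = 1"
    unfolding e cos_of_real by (simp add: cos_integer_2pi)
qed

lemma sin_add_two_pi_of_int: "sin (w + 2 * complex_of_real pi * of_int n) = sin w"
  by (simp add: sin_add sin_two_pi_of_int cos_two_pi_of_int)

lemma not_Ints_if_double_not_Ints:
  fixes x :: "'a :: ring_1"
  assumes "2 * x \<notin> \<int>"
  shows "x \<notin> \<int>"
  using assms Ints_mult[of 2 x] by auto

lemma sin_pi_mult_nonzero:
  fixes x :: complex
  assumes "x \<notin> \<int>"
  shows "sin (of_real pi * x) \<noteq> 0"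
proof
  assume "sin (of_real pi * x) = 0"
  then obtain n :: int where "of_real pi * x = of_real (of_int n * pi)" by (auto simp: sin_eq_0)
  hence "x = of_int n" by (simp add: mult.commute)
  thus False using assms by simp
qed

lemma sin_two_pi_mult_nonzero:
  fixes x :: complex
  assumes "2 * x \<notin> \<int>"
  shows "sin (2 * of_real pi * x) \<noteq> 0"
  using sin_pi_mult_nonzero[OF assms] by (simp add: mult_ac)

lemma has_integral_mult_sin_two_pi_of_int:
  "((\<lambda>u. of_real u * sin (2 * complex_of_real pi * of_int n * of_real u)) has_integral
     (if n = 0 then 0 else - 1 / (2 * complex_of_real pi * of_int n))) {0..1}"
proof (cases "n = 0")
  case False
  hence "2 * complex_of_real pi * of_int n \<noteq> 0" by simp
  from has_integral_mult_sin[OF this] show ?thesis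
    using False by (simp add: sin_two_pi_of_int cos_two_pi_of_int)
qed simp

definition rhs_kernel :: "complex \<Rightarrow> nat \<Rightarrow> complex \<Rightarrow> complex" where
  "rhs_kernel x b z = sin (2 * of_real pi * (x - of_nat b) * z) / sin (2 * of_real pi * x)
                      - z * cos (2 * of_real pi * of_nat b * z)"

lemma rhs_kernel_0 [simp]: "rhs_kernel x b 0 = 0"
  by (simp add: rhs_kernel_def)

lemma rhs_kernel_1:
  assumes "2 * x \<notin> \<int>"
  shows "rhs_kernel x b 1 = 0"
proof -
  have "sin (2 * of_real pi * (x - of_nat b) * 1)
        = sin (2 * of_real pi * x + 2 * complex_of_real pi * of_int (- int b))"
    by (simp add: algebra_simps)
  also have "\<dots> = sin (2 * of_real pi * x)" by (rule sin_add_two_pi_of_int)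
  finally show ?thesis
    using sin_two_pi_mult_nonzero[OF assms] cos_two_pi_of_int[of "int b"]
    by (simp add: rhs_kernel_def)
qed

lemma holomorphic_on_rhs_kernel:
  assumes "2 * x \<notin> \<int>"
  shows "rhs_kernel x b holomorphic_on UNIV"
  unfolding rhs_kernel_def using sin_two_pi_mult_nonzero[OF assms] by (intro holomorphic_intros) auto

definition rhs_kernel_coeff :: "complex \<Rightarrow> nat \<Rightarrow> nat \<Rightarrow> complex" where
  "rhs_kernel_coeff x b j =
     (1 / (x - of_nat b - of_nat j) - 1 / (x - of_nat b + of_nat j) + 1 / of_nat (j + b)
      + (if j = b then 0 else 1 / (of_nat j - of_nat b))) / (2 * of_real pi)"

lemma has_integral_rhs_kernel_mult_sin:
  assumes x: "2 * x \<notin> \<int>" and j: "j \<ge> 1"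
  shows "((\<lambda>u. rhs_kernel x b (of_real u) * of_real (2 * sin (2 * pi * real j * u)))
           has_integral rhs_kernel_coeff x b j) {0..1}"
proof -
  define \<alpha> where "\<alpha> = 2 * of_real pi * (x - of_nat b)"
  define \<beta> where "\<beta> = 2 * complex_of_real pi * of_nat j"
  define \<gamma> where "\<gamma> = 2 * complex_of_real pi * of_nat b"
  define s where "s = sin (2 * complex_of_real pi * x)"
  have "x \<notin> \<int>" by (rule not_Ints_if_double_not_Ints[OF x])
  hence "x - of_nat b - of_nat j \<noteq> 0" "x - of_nat b + of_nat j \<noteq> 0"
    by (metis Ints_of_nat Ints_add Ints_diff add_diff_cancel_left' diff_add_cancel diff_zero
        eq_diff_eq)+
  hence nz: "\<alpha> - \<beta> \<noteq> 0" "\<alpha> + \<beta> \<noteq> 0"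
    by (simp_all add: \<alpha>_def \<beta>_def flip: right_diff_distrib distrib_left)
  have "sin (\<alpha> - \<beta>) = sin (2 * of_real pi * x + 2 * complex_of_real pi * of_int (- int b - int j))"
    "sin (\<alpha> + \<beta>) = sin (2 * of_real pi * x + 2 * complex_of_real pi * of_int (int j - int b))"
    by (simp_all add: \<alpha>_def \<beta>_def algebra_simps)
  hence sin_ab: "sin (\<alpha> - \<beta>) = s" "sin (\<alpha> + \<beta>) = s" by (simp_all only: sin_add_two_pi_of_int s_def)
  have s: "s \<noteq> 0" using sin_two_pi_mult_nonzero[OF x] by (simp add: s_def)
  have i1: "((\<lambda>u. 2 * sin (\<alpha> * of_real u) * sin (\<beta> * of_real u) / s) has_integral
              (1 / (\<alpha> - \<beta>) - 1 / (\<alpha> + \<beta>))) {0..1}"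
    using has_integral_divide[OF has_integral_two_sin_mult_sin[OF nz], of s] s
    by (simp add: sin_ab diff_divide_distrib)
  have bg: "\<beta> + \<gamma> = 2 * complex_of_real pi * of_int (int (j + b))"
     "\<beta> - \<gamma> = 2 * complex_of_real pi * of_int (int j - int b)"
    by (simp_all add: \<beta>_def \<gamma>_def algebra_simps)
  have i2: "((\<lambda>u. of_real u * sin ((\<beta> + \<gamma>) * of_real u)) has_integral (- 1 / (\<beta> + \<gamma>))) {0..1}"
    using has_integral_mult_sin_two_pi_of_int[of "int (j + b)"] j by (simp only: bg) simp
  have i3: "((\<lambda>u. of_real u * sin ((\<beta> - \<gamma>) * of_real u)) has_integral
              (if j = b then 0 else - 1 / (\<beta> - \<gamma>))) {0..1}"
    using has_integral_mult_sin_two_pi_of_int[of "int j - int b"] by (simp only: bg) simp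
  have "rhs_kernel_coeff x b j
        = (1 / (\<alpha> - \<beta>) - 1 / (\<alpha> + \<beta>)) - (- 1 / (\<beta> + \<gamma>)) - (if j = b then 0 else - 1 / (\<beta> - \<gamma>))"
  proof -
    have scale: "1 / (2 * complex_of_real pi * y) = 1 / y / (2 * of_real pi)" for y
      by (simp add: mult.commute)
    have "\<alpha> - \<beta> = 2 * of_real pi * (x - of_nat b - of_nat j)" "\<alpha> + \<beta> = 2 * of_real pi * (x - of_nat b + of_nat j)"
      "\<beta> - \<gamma> = 2 * of_real pi * (of_nat j - of_nat b)"
      by (simp_all add: \<alpha>_def \<beta>_def \<gamma>_def algebra_simps)
    thus ?thesis
      unfolding rhs_kernel_coeff_def bg(1) scale minus_divide_left[symmetric]
      by (simp add: add_divide_distrib diff_divide_distrib mult.commute)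
  qed
  moreover have "rhs_kernel x b (of_real u) * of_real (2 * sin (2 * pi * real j * u))
      = 2 * sin (\<alpha> * of_real u) * sin (\<beta> * of_real u) / s
        - of_real u * sin ((\<beta> + \<gamma>) * of_real u) - of_real u * sin ((\<beta> - \<gamma>) * of_real u)" for u
    by (simp add: rhs_kernel_def \<alpha>_def \<beta>_def \<gamma>_def s_def sin_add sin_diff algebra_simps
        flip: sin_of_real)
  ultimately show ?thesis using has_integral_diff[OF has_integral_diff[OF i1 i2] i3] by simp
qed

section \<open>Digamma series\<close>

definition Digamma_term :: "complex \<Rightarrow> nat \<Rightarrow> complex" where
  "Digamma_term z k = inverse (of_nat (Suc k)) - inverse (z + of_nat k)"

lemma Digamma_term_sums:
  assumes "z \<noteq> 0"
  shows "Digamma_term z sums (Digamma z + euler_mascheroni)"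
  using summable_sums[OF summable_Digamma[OF assms]] by (simp add: Digamma_def Digamma_term_def[abs_def])

lemma Digamma_term_Suc_of_nat_sums: "Digamma_term (of_nat (Suc b)) sums harm b"
  using Digamma_term_sums[of "of_nat (Suc b)"]
  by (simp only: Digamma_of_nat of_nat_eq_0_iff) simp

lemma summable_inverse_Suc_squared: "summable (\<lambda>k. C * inverse (real (Suc k)) ^ 2)"
proof -
  have "summable (\<lambda>k. inverse (real k ^ 2))" by (rule inverse_power_summable) auto
  hence "summable (\<lambda>k. inverse (real (k + 1) ^ 2))" by (subst summable_iff_shift)
  thus ?thesis by (intro summable_mult) (simp add: power_inverse)
qed

lemma summable_norm_Digamma_term: "summable (\<lambda>k. norm (Digamma_term z k))"
proof (rule summable_comparison_test'[OF summable_inverse_Suc_squared[of "2 * norm (z - 1)"]])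
  fix k :: nat assume "k \<ge> nat \<lceil>2 * norm z\<rceil> + 1"
  hence "real k \<ge> 2 * norm z + 1" by linarith
  moreover have "norm (z + of_nat k) \<ge> real k - norm z"
    using norm_triangle_ineq2[of "of_nat k" "-z"] by (simp add: add.commute)
  ultimately have zk: "norm (z + of_nat k) \<ge> real (Suc k) / 2" by simp
  hence zk0: "z + of_nat k \<noteq> 0" by auto
  have "(of_nat (Suc k) :: complex) \<noteq> 0" by (simp only: of_nat_eq_0_iff)
  hence "Digamma_term z k = (z - 1) / (of_nat (Suc k) * (z + of_nat k))"
    using zk0 by (simp add: Digamma_term_def inverse_diff_inverse divide_simps)
  hence "norm (Digamma_term z k) = norm (z - 1) / (real (Suc k) * norm (z + of_nat k))"
    by (simp only: norm_divide norm_mult norm_of_nat)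
  also have "\<dots> \<le> norm (z - 1) / (real (Suc k) * (real (Suc k) / 2))"
    using zk0 by (intro divide_left_mono mult_left_mono zk) (auto intro!: mult_pos_pos)
  also have "\<dots> = 2 * norm (z - 1) * inverse (real (Suc k)) ^ 2"
    by (simp add: field_simps power2_eq_square)
  finally show "norm (norm (Digamma_term z k)) \<le> 2 * norm (z - 1) * inverse (real (Suc k)) ^ 2"
    by simp
qed

definition harmonic_shift_term :: "nat \<Rightarrow> nat \<Rightarrow> complex" where
  "harmonic_shift_term b k =
     (if Suc k = b then 0 else inverse (of_nat (Suc k) - of_nat b)) - inverse (of_nat (Suc k))"

lemma harmonic_shift_term_add: "harmonic_shift_term b (k + b) = Digamma_term (of_nat (Suc b)) k"
  by (simp add: harmonic_shift_term_def Digamma_term_def algebra_simps)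

lemma sum_harmonic_shift_term_lessThan:
  assumes "b \<ge> 1"
  shows "(\<Sum>k<b. harmonic_shift_term b k) = - harm (b - 1) - harm b"
proof -
  obtain m where m: "b = Suc m" using assms by (cases b) auto
  have "(\<Sum>k<b. if Suc k = b then 0 else inverse (of_nat (Suc k) - of_nat b :: complex))
      = (\<Sum>k<m. inverse (of_nat (Suc k) - of_nat b))" by (simp add: m)
  also have "\<dots> = (\<Sum>k<m. - inverse (of_nat (Suc (m - Suc k))))"
  proof (rule sum.cong[OF refl])
    fix k assume "k \<in> {..<m}"
    hence eq: "(of_nat (Suc k) - of_nat b :: complex) = - of_nat (Suc (m - Suc k))"
      by (simp add: m of_nat_diff)
    show "inverse (of_nat (Suc k) - of_nat b :: complex) = - inverse (of_nat (Suc (m - Suc k)))"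
      unfolding eq by (rule inverse_minus_eq)
  qed
  also have "\<dots> = (\<Sum>k<m. - inverse (of_nat (Suc k)))"
    by (rule sum.nat_diff_reindex[where g = "\<lambda>k. - inverse (of_nat (Suc k) :: complex)"])
  finally show ?thesis
    by (simp add: harmonic_shift_term_def sum_subtractf m harm_altdef sum_negf)
qed

lemma harmonic_shift_term_sums:
  assumes "b \<ge> 1"
  shows "harmonic_shift_term b sums (- harm (b - 1))"
proof -
  have "(\<lambda>k. harmonic_shift_term b (k + b)) sums harm b"
    unfolding harmonic_shift_term_add by (rule Digamma_term_Suc_of_nat_sums)
  hence "harmonic_shift_term b sums (harm b + (\<Sum>k<b. harmonic_shift_term b k))"
    by (simp only: sums_iff_shift)
  thus ?thesis using sum_harmonic_shift_term_lessThan[OF assms] by simp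
qed

lemma summable_norm_harmonic_shift_term: "summable (\<lambda>k. norm (harmonic_shift_term b k))"
  using summable_norm_Digamma_term[of "of_nat (Suc b)"]
  by (subst summable_iff_shift[of _ b, symmetric]) (simp only: harmonic_shift_term_add)

lemma rhs_kernel_coeff_Suc:
  "rhs_kernel_coeff x b (Suc k) =
     (Digamma_term (1 - (x - of_nat b)) k + Digamma_term (1 + (x - of_nat b)) k
      - Digamma_term (of_nat (Suc b)) k + harmonic_shift_term b k) / (2 * of_real pi)"
proof -
  have e1: "1 / (x - of_nat b - of_nat (Suc k)) = - inverse ((1 - (x - of_nat b)) + of_nat k)"
    by (subst inverse_minus_eq[symmetric]) (simp add: divide_inverse algebra_simps)
  have e2: "1 / (x - of_nat b + of_nat (Suc k)) = inverse ((1 + (x - of_nat b)) + of_nat k)"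
    by (simp add: divide_inverse algebra_simps)
  have e3: "1 / of_nat (Suc k + b) = inverse (of_nat (Suc b) + of_nat k :: complex)"
    by (simp add: divide_inverse algebra_simps)
  have e4: "(if Suc k = b then 0 else 1 / (of_nat (Suc k) - of_nat b))
      = harmonic_shift_term b k + inverse (of_nat (Suc k) :: complex)"
    by (simp add: harmonic_shift_term_def divide_inverse)
  show ?thesis
    unfolding rhs_kernel_coeff_def e1 e2 e3 e4 Digamma_term_def by (simp add: algebra_simps)
qed

lemma rhs_kernel_coeff_sums:
  assumes x: "x \<notin> \<int>" and b: "b \<ge> 1"
  shows "(\<lambda>k. rhs_kernel_coeff x b (Suc k)) sums
          ((Digamma (1 - (x - of_nat b)) + Digamma (1 + (x - of_nat b)) + 2 * euler_mascheroni
             - harm b - harm (b - 1)) / (2 * of_real pi))"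
proof -
  have "1 - (x - of_nat b) \<noteq> 0"
  proof
    assume "1 - (x - of_nat b) = 0"
    hence "x = of_nat (Suc b)" by (simp add: algebra_simps)
    thus False using x by simp
  qed
  moreover have "1 + (x - of_nat b) \<noteq> 0"
  proof
    assume "1 + (x - of_nat b) = 0"
    hence "x = of_int (int b - 1)" by (simp add: algebra_simps)
    thus False using x by simp
  qed
  ultimately have "(\<lambda>k. (Digamma_term (1 - (x - of_nat b)) k + Digamma_term (1 + (x - of_nat b)) k
               - Digamma_term (of_nat (Suc b)) k + harmonic_shift_term b k) / (2 * of_real pi))
         sums (((Digamma (1 - (x - of_nat b)) + euler_mascheroni)
                + (Digamma (1 + (x - of_nat b)) + euler_mascheroni) - harm b + - harm (b - 1))
               / (2 * of_real pi))"
    by (intro sums_divide sums_add sums_diff Digamma_term_sums Digamma_term_Suc_of_nat_sums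
        harmonic_shift_term_sums[OF b])
  thus ?thesis by (simp add: rhs_kernel_coeff_Suc algebra_simps)
qed

lemma summable_norm_rhs_kernel_coeff:
  "summable (\<lambda>k. norm (rhs_kernel_coeff x b (Suc k)))"
proof (rule summable_comparison_test[OF _ summable_divide[OF summable_add[OF summable_add[OF
        summable_add[OF summable_norm_Digamma_term[of "1 - (x - of_nat b)"]
        summable_norm_Digamma_term[of "1 + (x - of_nat b)"]]
        summable_norm_Digamma_term[of "of_nat (Suc b)"]] summable_norm_harmonic_shift_term[of b]], of "2 * pi"]],
       intro exI allI impI)
  fix k
  show "norm (norm (rhs_kernel_coeff x b (Suc k))) \<le>
          (norm (Digamma_term (1 - (x - of_nat b)) k) + norm (Digamma_term (1 + (x - of_nat b)) k)
           + norm (Digamma_term (of_nat (Suc b)) k) + norm (harmonic_shift_term b k)) / (2 * pi)"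
  proof -
    have "norm (a + b - c + d) \<le> norm a + norm b + norm c + norm d" for a b c d :: complex
      using norm_triangle_ineq[of "a + b - c" d] norm_triangle_ineq4[of "a + b" c]
        norm_triangle_ineq[of a b] by linarith
    thus ?thesis unfolding rhs_kernel_coeff_Suc by (simp add: norm_divide divide_right_mono)
  qed
qed

section \<open>Closed form of the right-hand side\<close>

lemma Digamma_reflection:
  fixes z :: complex
  assumes z: "z \<notin> \<int>"
  shows "Digamma (1 - z) - Digamma z = of_real pi * cot (of_real pi * z)"
proof -
  have z0: "z \<notin> \<int>\<^sub>\<le>\<^sub>0" and z1: "1 - z \<notin> \<int>\<^sub>\<le>\<^sub>0"
    using z nonpos_Ints_subset_Ints Ints_diff[OF Ints_1, of "1 - z"] by auto
  have s: "sin (of_real pi * z) \<noteq> 0" by (rule sin_pi_mult_nonzero[OF z])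
  have G: "(\<lambda>z::complex. Gamma z * Gamma (1 - z)) = (\<lambda>z. of_real pi / sin (of_real pi * z))"
    by (rule ext) (rule Gamma_reflection_complex)
  \<comment> \<open>Differentiate both sides of the reflection formula for Gamma.\<close>
  have d1: "((\<lambda>z. Gamma z * Gamma (1 - z)) has_field_derivative
              Gamma z * Gamma (1 - z) * (Digamma z - Digamma (1 - z))) (at z)"
    using z0 z1 by (auto intro!: derivative_eq_intros simp: algebra_simps)
  have d2: "((\<lambda>z. of_real pi / sin (of_real pi * z)) has_field_derivative
              - (of_real pi / sin (of_real pi * z)) * (of_real pi * cot (of_real pi * z))) (at z)"
    using s by (auto intro!: derivative_eq_intros simp: cot_def field_simps power2_eq_square)
  have "of_real pi / sin (of_real pi * z) * (Digamma z - Digamma (1 - z))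
        = of_real pi / sin (of_real pi * z) * (- of_real pi * cot (of_real pi * z))"
    using DERIV_unique[OF d1 d2[folded G]] by (simp only: Gamma_reflection_complex) simp
  moreover have "of_real pi / sin (of_real pi * z) \<noteq> 0" using s by simp
  ultimately have "Digamma z - Digamma (1 - z) = - of_real pi * cot (of_real pi * z)"
    by (simp only: mult_cancel_left) simp
  thus ?thesis by (simp add: algebra_simps)
qed

lemma cot_diff_of_nat_mult_pi:
  fixes z :: complex
  shows "cot (z - of_nat n * of_real pi) = cot z"
proof (induction n)
  case (Suc n)
  have "cot (z - of_nat (Suc n) * of_real pi) = cot ((z - of_nat (Suc n) * of_real pi) + of_real pi)"
    by (simp add: cot_def sin_plus_pi cos_plus_pi)
  also have "\<dots> = cot (z - of_nat n * of_real pi)" by (simp add: algebra_simps)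
  finally show ?case using Suc.IH by simp
qed simp

lemma rhs_integral_eq_Digamma:
  fixes x :: complex
  assumes x: "2 * x \<notin> \<int>" and b: "b \<ge> 1"
  shows "integral {0..1} (\<lambda>u::real.
           (sin (2 * of_real pi * (x - of_nat b) * of_real u) / sin (2 * of_real pi * x)
            - of_real u * of_real (cos (2 * pi * real b * u))) * of_real (cot (pi * u)))
         = (Digamma (1 - (x - of_nat b)) + Digamma (1 + (x - of_nat b)) + 2 * euler_mascheroni
             - harm b - harm (b - 1)) / (2 * of_real pi)"
proof -
  obtain B where B: "\<And>u. u \<in> {0..1} \<Longrightarrow> norm (rhs_kernel x b (of_real u) * of_real (cot (pi * u))) \<le> B"
    using bounded_mult_cot_if_vanishing_at_0_1[OF holomorphic_on_rhs_kernel[OF x] rhs_kernel_0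
          rhs_kernel_1[OF x]] by blast
  have "continuous_on {0..1} (\<lambda>u. rhs_kernel x b (of_real u))"
    by (rule continuous_on_compose2[OF holomorphic_on_imp_continuous_on[OF holomorphic_on_rhs_kernel[OF x]]])
       (auto intro: continuous_intros)
  from has_integral_mult_cot_of_sine_coeffs[OF this B
      has_integral_rhs_kernel_mult_sin[OF x, of "Suc k" b for k] summable_norm_rhs_kernel_coeff]
  have "((\<lambda>u. rhs_kernel x b (of_real u) * of_real (cot (pi * u))) has_integral
          (\<Sum>k. rhs_kernel_coeff x b (Suc k))) {0..1}"
    by simp
  moreover have "(\<Sum>k. rhs_kernel_coeff x b (Suc k))
      = (Digamma (1 - (x - of_nat b)) + Digamma (1 + (x - of_nat b)) + 2 * euler_mascheroni
          - harm b - harm (b - 1)) / (2 * of_real pi)"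
    using rhs_kernel_coeff_sums[OF not_Ints_if_double_not_Ints[OF x] b] by (rule sums_unique[symmetric])
  moreover have "integral {0..1} (\<lambda>u::real.
           (sin (2 * of_real pi * (x - of_nat b) * of_real u) / sin (2 * of_real pi * x)
            - of_real u * of_real (cos (2 * pi * real b * u))) * of_real (cot (pi * u)))
      = integral {0..1} (\<lambda>u. rhs_kernel x b (of_real u) * of_real (cot (pi * u)))"
    by (intro integral_cong) (simp add: rhs_kernel_def cos_of_real[symmetric])
  ultimately show ?thesis by (simp add: integral_unique)
qed

lemma rhs_formula_eq_Digamma:
  assumes b: "b > 0" and x: "2 * x \<notin> \<int>" "x \<noteq> of_nat b"
  shows "rhs_formula b x = x * (harm b - Digamma (of_nat (Suc b) - x) - euler_mascheroni)"
proof -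
  define a where "a = x - of_nat b"
  define P where "P = Digamma (1 - a)"
  define C where "C = of_real pi * cot (of_real pi * x)"
  have b1: "b \<ge> 1" using b by simp
  have xZ: "x \<notin> \<int>" by (rule not_Ints_if_double_not_Ints[OF x(1)])
  hence aZ: "a \<notin> \<int>" by (auto simp: a_def dest: Ints_add[OF _ Ints_of_nat, of _ b])
  have a0: "a \<noteq> 0" using x(2) by (simp add: a_def)
  have "Digamma (1 + a) = Digamma a + 1 / a"
    using Digamma_plus1[OF a0] by (simp add: add.commute divide_inverse)
  also have "Digamma a = P - C"
    using Digamma_reflection[OF aZ] cot_diff_of_nat_mult_pi[of "of_real pi * x" b]
    by (simp add: P_def C_def a_def algebra_simps)
  finally have D: "Digamma (1 + a) = P - C + 1 / a" .
  have H: "harm (b - 1) = harm b - 1 / (of_nat b :: complex)"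
    using b by (cases b) (simp_all add: harm_Suc divide_inverse)
  have "rhs_formula b x = x\<^sup>2 / (2 * of_nat b * a) - x / 2 * C
          - of_real pi * x * ((P + (P - C + 1 / a) + 2 * euler_mascheroni - harm b
                               - (harm b - 1 / of_nat b)) / (2 * of_real pi))"
    unfolding rhs_formula_def rhs_integral_eq_Digamma[OF x(1) b1]
    unfolding a_def[symmetric] D H P_def[symmetric]
    by (simp add: C_def)
  also have "\<dots> = x * (harm b - P - euler_mascheroni)"
  proof -
    have "x = a + of_nat b" by (simp add: a_def)
    thus ?thesis using a0 b by (simp add: field_simps power2_eq_square)
  qed
  finally show ?thesis by (simp add: P_def a_def algebra_simps)
qed

section \<open>Closed form of the power series\<close>

lemma sums_suminf_swap:
  fixes w :: "nat \<Rightarrow> nat \<Rightarrow> 'a :: {banach, second_countable_topology}"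
  assumes N: "\<And>j. (\<lambda>k. norm (w k j)) sums N j" and summable_N: "summable N"
    and S: "\<And>j. (\<lambda>k. w k j) sums S j"
  shows "(\<lambda>k. \<Sum>j. w k j) sums (\<Sum>j. S j)"
proof -
  have N_nonneg: "N j \<ge> 0" for j
    using sums_unique[OF N[of j]] suminf_nonneg[OF sums_summable[OF N[of j]]] by simp
  have norm_le_N: "norm (w k j) \<le> N j" for k j
    using sum_le_suminf[OF sums_summable[OF N[of j]], of "{k}"] sums_unique[OF N[of j]] by simp
  have "(\<lambda>z. norm (case z of (j, k) \<Rightarrow> w k j)) summable_on UNIV \<times> UNIV"
  proof (rule Infinite_Sum.abs_summable_on_Sigma_iff[where f = "\<lambda>z. case z of (j, k) \<Rightarrow> w k j" and A = UNIV
        and B = "\<lambda>_. UNIV", THEN iffD2], intro conjI ballI)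
    show "(\<lambda>k. norm (case (j, k) of (j, k) \<Rightarrow> w k j)) summable_on UNIV" for j
      using sums_summable[OF N[of j]] by (simp add: summable_on_UNIV_nonneg_real_iff)
    have "infsum (\<lambda>k. norm (case (j, k) of (j, k) \<Rightarrow> w k j)) UNIV = N j" for j
      by (simp, rule infsumI, rule sums_nonneg_imp_has_sum[OF N]) simp
    thus "(\<lambda>j. norm (infsum (\<lambda>k. norm (case (j, k) of (j, k) \<Rightarrow> w k j)) UNIV)) summable_on UNIV"
      using summable_N N_nonneg by (simp add: summable_on_UNIV_nonneg_real_iff)
  qed
  hence by_rows: "(\<lambda>(j, k). w k j) summable_on UNIV \<times> UNIV" by (rule abs_summable_summable)
  hence by_cols: "(\<lambda>(k, j). w k j) summable_on UNIV \<times> UNIV"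
    by (subst summable_on_swap) (simp add: case_prod_unfold)
  have row_sum: "infsum (\<lambda>j. w k j) UNIV = (\<Sum>j. w k j)" for k
  proof -
    have summable_row: "summable (\<lambda>j. norm (w k j))"
      using norm_le_N by (intro summable_comparison_test[OF _ summable_N]) auto
    show ?thesis
      by (rule infsumI[OF norm_summable_imp_has_sum[OF summable_row
            summable_sums[OF summable_norm_cancel[OF summable_row]]]])
  qed
  have col_sum: "infsum (\<lambda>k. w k j) UNIV = S j" for j
    by (rule infsumI[OF norm_summable_imp_has_sum[OF sums_summable[OF N] S]])
  have "(\<lambda>k. \<Sum>j. w k j) summable_on UNIV"
    using summable_on_Sigma_banach[of "\<lambda>k j. w k j" UNIV "\<lambda>_. UNIV"] by_cols by (simp add: row_sum)
  moreover have "S summable_on UNIV"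
    using summable_on_Sigma_banach[of "\<lambda>j k. w k j" UNIV "\<lambda>_. UNIV"] by_rows by (simp add: col_sum)
  moreover have "infsum (\<lambda>k. \<Sum>j. w k j) UNIV = infsum S UNIV"
    using infsum_swap_banach[OF by_cols] by (simp add: row_sum col_sum)
  ultimately show ?thesis
    by (metis has_sum_imp_sums has_sum_infsum sums_unique)
qed

lemma zeta_nat_minus_harm_gen_sums:
  assumes "k \<ge> 2"
  shows "(\<lambda>j. 1 / real (j + Suc b) ^ k) sums (zeta_nat k - harm_gen k b)"
proof -
  have "summable (\<lambda>n. inverse (real n ^ k))" by (rule inverse_power_summable[OF assms])
  hence "summable (\<lambda>n. inverse (real (n + 1) ^ k))" by (subst summable_iff_shift)
  hence "(\<lambda>n. 1 / real (Suc n) ^ k) sums zeta_nat k"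
    by (simp add: zeta_nat_def summable_sums divide_inverse)
  hence "(\<lambda>j. 1 / real (Suc (j + b)) ^ k) sums (zeta_nat k - (\<Sum>j<b. 1 / real (Suc j) ^ k))"
    using sums_iff_shift[of "\<lambda>n. 1 / real (Suc n) ^ k" b] by simp
  moreover have "(\<Sum>j<b. 1 / real (Suc j) ^ k) = harm_gen k b"
    unfolding harm_gen_def by (simp add: sum.atLeast1_atMost_eq)
  ultimately show ?thesis by simp
qed

lemma power_add_2_sums:
  fixes q :: "'a :: {real_normed_field, banach}"
  assumes "norm q < 1"
  shows "(\<lambda>k. q ^ (k + 2)) sums (q\<^sup>2 / (1 - q))"
proof -
  have "(\<lambda>k. q ^ (k + 2)) = (\<lambda>k. q\<^sup>2 * q ^ k)" by (simp only: power_add mult.commute)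
  thus ?thesis using sums_mult[OF geometric_sums[OF assms], of "q\<^sup>2"] by simp
qed

lemma summable_geometric_tail_norms:
  fixes r :: real
  assumes "0 \<le> r"
  shows "summable (\<lambda>j. r\<^sup>2 / (real (j + Suc b) * (real (j + Suc b) - r)))"
proof (rule summable_comparison_test'[OF summable_inverse_Suc_squared[of "2 * r\<^sup>2"]])
  fix j :: nat assume "j \<ge> nat \<lceil>2 * r\<rceil>"
  hence m: "real (j + Suc b) \<ge> 2 * r" "real (j + Suc b) \<ge> real (Suc j)" by linarith+
  hence pos: "real (j + Suc b) * (real (Suc j) / 2) > 0" by simp
  have "norm (r\<^sup>2 / (real (j + Suc b) * (real (j + Suc b) - r)))
        = r\<^sup>2 / (real (j + Suc b) * (real (j + Suc b) - r))"
    using m assms by simp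
  also have "\<dots> \<le> r\<^sup>2 / (real (j + Suc b) * (real (Suc j) / 2))"
    using m pos by (intro divide_left_mono mult_left_mono) auto
  also have "\<dots> \<le> r\<^sup>2 / (real (Suc j) * (real (Suc j) / 2))"
    using m by (intro divide_left_mono mult_right_mono) auto
  also have "\<dots> = 2 * r\<^sup>2 * inverse (real (Suc j)) ^ 2"
    by (simp add: field_simps power2_eq_square)
  finally show "norm (r\<^sup>2 / (real (j + Suc b) * (real (j + Suc b) - r)))
                \<le> 2 * r\<^sup>2 * inverse (real (Suc j)) ^ 2" .
qed

lemma power_add_2_div_sums_Digamma_term:
  fixes x :: complex
  assumes "norm x < real (j + Suc b)"
  shows "(\<lambda>k. (x / of_real (real (j + Suc b))) ^ (k + 2)) sums
           (x * (Digamma_term (of_nat (Suc b)) j - Digamma_term (of_nat (Suc b) - x) j))"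
proof -
  define M where "M = (of_real (real (j + Suc b)) :: complex)"
  have norm_M: "norm M = real (j + Suc b)" unfolding M_def norm_of_real by simp
  hence M0: "M \<noteq> 0" by auto
  have Mx: "M - x \<noteq> 0" using assms norm_M by auto
  have "norm (x / M) < 1" using assms norm_M M0 by (simp add: norm_divide)
  hence "(\<lambda>k. (x / M) ^ (k + 2)) sums ((x / M)\<^sup>2 / (1 - x / M))" by (rule power_add_2_sums)
  moreover have "of_nat (Suc b) + of_nat j = M" "(of_nat (Suc b) - x) + of_nat j = M - x"
    by (simp_all add: M_def)
  hence "Digamma_term (of_nat (Suc b)) j - Digamma_term (of_nat (Suc b) - x) j
         = inverse (M - x) - inverse M"
    by (simp add: Digamma_term_def)
  moreover have "(x / M)\<^sup>2 / (1 - x / M) = x * (inverse (M - x) - inverse M)"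
    using M0 Mx by (simp add: field_simps power2_eq_square)
  ultimately show ?thesis by (simp add: M_def)
qed

lemma f_series_terms_sums:
  fixes x :: complex
  assumes x: "norm x < real b + 1"
  shows "(\<lambda>k. x ^ (k + 2) * of_real (zeta_nat (k + 2) - harm_gen (k + 2) b)) sums
           (x * (harm b - Digamma (of_nat (Suc b) - x) - euler_mascheroni))"
proof -
  define m where "m j = real (j + Suc b)" for j
  define w where "w k j = (x / of_real (m j)) ^ (k + 2)" for k j
  have m: "norm x < m j" "0 < m j" for j using x by (simp_all add: m_def)
  have "(\<lambda>k. norm (w k j)) sums ((norm x)\<^sup>2 / (m j * (m j - norm x)))" for j
  proof -
    have "(\<lambda>k. (norm x / m j) ^ (k + 2)) sums ((norm x / m j)\<^sup>2 / (1 - norm x / m j))"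
      by (intro power_add_2_sums) (use m[of j] in simp)
    moreover have "(norm x / m j)\<^sup>2 / (1 - norm x / m j) = (norm x)\<^sup>2 / (m j * (m j - norm x))"
      using m[of j] by (simp add: field_simps power2_eq_square)
    moreover have "norm (w k j) = (norm x / m j) ^ (k + 2)" for k
      using m[of j] unfolding w_def norm_power norm_divide norm_of_real by simp
    ultimately show ?thesis by simp
  qed
  moreover have "summable (\<lambda>j. (norm x)\<^sup>2 / (m j * (m j - norm x)))"
    unfolding m_def by (rule summable_geometric_tail_norms) simp
  moreover have "(\<lambda>k. w k j) sums (x * (Digamma_term (of_nat (Suc b)) j
                                        - Digamma_term (of_nat (Suc b) - x) j))" for j
    unfolding w_def m_def by (rule power_add_2_div_sums_Digamma_term) (use m[of j] in \<open>simp add: m_def\<close>)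
  ultimately have "(\<lambda>k. \<Sum>j. w k j) sums
                    (\<Sum>j. x * (Digamma_term (of_nat (Suc b)) j - Digamma_term (of_nat (Suc b) - x) j))"
    by (rule sums_suminf_swap)
  moreover have "(\<lambda>j. w k j) sums (x ^ (k + 2) * of_real (zeta_nat (k + 2) - harm_gen (k + 2) b))"
    for k
    using sums_mult[OF sums_of_real[OF zeta_nat_minus_harm_gen_sums[of "k + 2" b]], of "x ^ (k + 2)"]
    by (simp add: w_def m_def power_divide)
  moreover have "(\<lambda>j. x * (Digamma_term (of_nat (Suc b)) j - Digamma_term (of_nat (Suc b) - x) j))
      sums (x * (harm b - Digamma (of_nat (Suc b) - x) - euler_mascheroni))"
  proof -
    have "of_nat (Suc b) - x \<noteq> 0"
    proof
      assume "of_nat (Suc b) - x = 0"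
      hence "norm x = real (Suc b)" by (metis eq_iff_diff_eq_0 norm_of_nat)
      thus False using x by simp
    qed
    from sums_mult[OF sums_diff[OF Digamma_term_Suc_of_nat_sums Digamma_term_sums[OF this]], of x]
    show ?thesis by (simp add: algebra_simps)
  qed
  ultimately show ?thesis by (simp add: sums_iff)
qed

lemma holomorphic_on_Digamma_closed_form:
  assumes "\<And>x. x \<in> A \<Longrightarrow> of_nat (Suc b) - x \<notin> \<int>\<^sub>\<le>\<^sub>0"
  shows "(\<lambda>x. x * (harm b - Digamma (of_nat (Suc b) - x) - euler_mascheroni)) holomorphic_on A"
proof -
  have "Digamma holomorphic_on ((\<lambda>x. of_nat (Suc b) - x) ` A)"
    using assms by (intro holomorphic_on_Polygamma) auto
  moreover have "(\<lambda>x. of_nat (Suc b) - x) holomorphic_on A" by (intro holomorphic_intros)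
  ultimately have "(\<lambda>x. Digamma (of_nat (Suc b) - x)) holomorphic_on A"
    using holomorphic_on_compose[of "\<lambda>x. of_nat (Suc b) - x" A Digamma] by (simp add: o_def)
  thus ?thesis by (intro holomorphic_intros)
qed

theorem mainTheorem9:
  fixes b :: nat
  assumes "b > 0"
  shows "(\<forall>x::complex. norm x < real b + 1 \<longrightarrow>
            summable (\<lambda>k. x ^ (k + 2) * complex_of_real (zeta_nat (k + 2) - harm_gen (k + 2) b)))
       \<and> (\<forall>x::complex. norm x < real b + 1 \<longrightarrow> x \<noteq> of_nat b \<longrightarrow> 2 * x \<notin> \<int> \<longrightarrow>
            f_series b x = rhs_formula b x)
       \<and> rhs_formula b holomorphic_on {x::complex. x \<noteq> of_nat b \<and> 2 * x \<notin> \<int>}"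
proof (intro conjI allI impI)
  fix x :: complex assume "norm x < real b + 1"
  thus "summable (\<lambda>k. x ^ (k + 2) * complex_of_real (zeta_nat (k + 2) - harm_gen (k + 2) b))"
    by (rule sums_summable[OF f_series_terms_sums])
next
  fix x :: complex assume "norm x < real b + 1" "x \<noteq> of_nat b" "2 * x \<notin> \<int>"
  thus "f_series b x = rhs_formula b x"
    using f_series_terms_sums rhs_formula_eq_Digamma[OF assms]
    by (simp add: f_series_def sums_iff)
next
  have "of_nat (Suc b) - x \<notin> \<int>\<^sub>\<le>\<^sub>0" if "2 * x \<notin> \<int>" for x :: complex
    using not_Ints_if_double_not_Ints[OF that] nonpos_Ints_subset_Ints Ints_diff[of "of_nat (Suc b)"]
    by fastforce
  thus "rhs_formula b holomorphic_on {x::complex. x \<noteq> of_nat b \<and> 2 * x \<notin> \<int>}"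
    by (intro holomorphic_transform[OF holomorphic_on_Digamma_closed_form])
       (auto simp: rhs_formula_eq_Digamma[OF assms])
qed

end
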